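(* Fix $\delta\in(0,1)$. Suppose that for each $t\ge2$ and $g\in[t-1]$, $T^{(t)}_g\in\{0,1\}$ is a measurable function of $(Y_1,\dots,Y_t)$, and that: (A) for all $t\ge 2$ and $g\in[t-1]$, $\mathbb P_\infty(T^{(t)}_g=1)\le \delta/(3t^2\log t)$; (B) there are a number $\rho=\rho(P_1,P_2)\ge0$ and a function $r(t,\delta)>0$ non-decreasing in $t$ such that whenever $\tau<\infty$, $\tau<t\le 2\tau$ and $(t-\tau)\rho\ge r(t,\delta)$, we have $\mathbb P_\tau(T^{(t)}_g=1)\ge1-\delta$ for every integer $g$ with $(t-\tau)/2\le g\le t-\tau$. Let $\hat\tau=\inf\{t\in\mathbb N:t\ge2,\ \max_{g\in G^{(t)}}T^{(t)}_g=1\}$. Then $\mathbb P_\infty(\hat\tau<\infty)\le\delta$, and for every $\tau\in\mathbb N$ with $\tau\rho\ge r(2\tau,\delta)$, $$\mathbb P_\tau\Big\{\hat\tau\le\tau+\Big\lceil\frac{r(2\tau,\delta)}{\rho}\Big\rceil\Big\}\ge1-\delta.$$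
   Context: $\log$ is the natural logarithm, $[n]=\{1,\dots,n\}$, $\inf\emptyset=\infty$. Model: $(Y_i)_{i\in\mathbb N}$ are independent random vectors in $\mathbb R^p$; for $\tau\in\mathbb N\cup\{\infty\}$, under $\mathbb P_\tau$, $Y_i\sim P_1$ for $i\le\tau$ and $Y_i\sim P_2$ for $i>\tau$ (all $Y_i\sim P_1$ if $\tau=\infty$). Dynamic geometric grid: for $t\ge2$, $G^{(t)}=\{1\}\cup\bigcup_{j=1}^{\lfloor \log_2\{(t-1)/3\}\rfloor+1}\{g^{(t)}_{L,j}\}\cup\bigcup_{j=1}^{\lfloor\log_2(t-1)\rfloor-1}\{g^{(t)}_{R,j}\}$ with $g^{(t)}_{L,j}=2^j+\{(t-1)\bmod 2^{j-1}\}$, $g^{(t)}_{R,j}=g^{(t)}_{L,j}+2^{j-1}$ (empty unions if the upper index is $<1$; $a\bmod b=a-b\lfloor a/b\rfloor$). *)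

theory Defs
  imports "HOL-Probability.Probability"
begin

text \<open>Law of the whole data sequence under the change point tau (index 0 is a dummy
  coordinate with law P1; the data are coordinates 1,2,...). tau = infinity means no change.\<close>
definition Ptau :: "'a measure \<Rightarrow> 'a measure \<Rightarrow> enat \<Rightarrow> (nat \<Rightarrow> 'a) measure" where
  "Ptau P1 P2 \<tau> = (\<Pi>\<^sub>M i\<in>UNIV. (if enat i \<le> \<tau> then P1 else P2))"

definition gL :: "nat \<Rightarrow> nat \<Rightarrow> nat" where
  "gL t j = 2 ^ j + ((t - 1) mod 2 ^ (j - 1))"

definition gR :: "nat \<Rightarrow> nat \<Rightarrow> nat" where
  "gR t j = gL t j + 2 ^ (j - 1)"

definition grid :: "nat \<Rightarrow> nat set" where
  "grid t = {1}
     \<union> {gL t j | j. 1 \<le> j \<and> int j \<le> \<lfloor>log 2 ((real t - 1) / 3)\<rfloor> + 1}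
     \<union> {gR t j | j. 1 \<le> j \<and> int j \<le> \<lfloor>log 2 (real t - 1)\<rfloor> - 1}"

definition tauhat :: "(nat \<Rightarrow> nat \<Rightarrow> 'w \<Rightarrow> bool) \<Rightarrow> 'w \<Rightarrow> enat" where
  "tauhat T \<omega> = (if \<exists>t\<ge>2. \<exists>g\<in>grid t. T t g \<omega>
     then enat (LEAST t. 2 \<le> t \<and> (\<exists>g\<in>grid t. T t g \<omega>)) else \<infinity>)"

end

theory Submission
  imports Defs "HOL-Analysis.Harmonic_Numbers"
begin

text \<open>False alarms: the grid at time t has at most 3 ln t points, so a union bound over the
  grid turns (A) into the bound delta / t^2 for an alarm at time t, and the sum of 1 / t^2 over
  t >= 2 is at most 1. Detection: with d = ceil (r(2 tau, delta) / rho) <= tau, the grid at time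
  tau + d contains some g with d/2 <= g <= d -- if 2^j <= d < 2^(j+1), either the left point
  2^j <= gL < 3 * 2^(j-1) or the right point 3 * 2^(j-2) <= gR < 2^j of the block below does.
  Since r is monotone, (B) applies to that test, and its firing forces the stopping time to be
  at most tau + d.\<close>

lemma int_le_floor_log2_iff:
  fixes x :: real
  assumes "0 < x"
  shows "int j \<le> \<lfloor>log 2 x\<rfloor> \<longleftrightarrow> 2 ^ j \<le> x"
proof -
  have "int j \<le> \<lfloor>log 2 x\<rfloor> \<longleftrightarrow> real j \<le> log 2 x"
    by (metis floor_of_nat le_floor_iff of_int_of_nat_eq)
  also have "\<dots> \<longleftrightarrow> 2 ^ j \<le> x"
    using assms by (simp add: le_log_iff powr_realpow)
  finally show ?thesis .
qed

lemma grid_eq: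
  assumes "2 \<le> t"
  shows "grid t = insert 1 (gL t ` {j. 1 \<le> j \<and> 3 * 2 ^ (j - 1) \<le> t - 1}
                           \<union> gR t ` {j. 1 \<le> j \<and> 2 ^ (j + 1) \<le> t - 1})"
proof -
  have left: "int j \<le> \<lfloor>log 2 ((real t - 1) / 3)\<rfloor> + 1 \<longleftrightarrow> 3 * 2 ^ (j - 1) \<le> t - 1"
    if "1 \<le> j" for j
  proof -
    have "int j \<le> \<lfloor>log 2 ((real t - 1) / 3)\<rfloor> + 1 \<longleftrightarrow> 2 ^ (j - 1) \<le> (real t - 1) / 3"
      using that assms int_le_floor_log2_iff[of "(real t - 1) / 3" "j - 1"] by auto
    also have "\<dots> \<longleftrightarrow> 3 * 2 ^ (j - 1) \<le> t - 1"
      using assms of_nat_le_iff[of "3 * 2 ^ (j - 1)" "t - 1", where 'a=real]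
      by (simp add: field_simps of_nat_diff)
    finally show ?thesis .
  qed
  have right: "int j \<le> \<lfloor>log 2 (real t - 1)\<rfloor> - 1 \<longleftrightarrow> 2 ^ (j + 1) \<le> t - 1" for j
  proof -
    have "int j \<le> \<lfloor>log 2 (real t - 1)\<rfloor> - 1 \<longleftrightarrow> 2 ^ (j + 1) \<le> real t - 1"
      using assms int_le_floor_log2_iff[of "real t - 1" "j + 1"] by auto
    also have "\<dots> \<longleftrightarrow> 2 ^ (j + 1) \<le> t - 1"
      using assms of_nat_le_iff[of "2 ^ (j + 1)" "t - 1", where 'a=real]
      by (simp add: of_nat_diff)
    finally show ?thesis .
  qed
  show ?thesis
    unfolding grid_def using left right by (auto simp: image_def)
qed

lemma gL_bounds:
  assumes "1 \<le> j"
  shows "2 ^ j \<le> gL t j" "gL t j < 3 * 2 ^ (j - 1)"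
proof -
  obtain i where j: "j = Suc i" using assms by (cases j) auto
  have "(t - 1) mod 2 ^ i < 2 ^ i" by simp
  then show "2 ^ j \<le> gL t j" "gL t j < 3 * 2 ^ (j - 1)"
    unfolding gL_def j by simp_all
qed

lemma gR_bounds:
  assumes "1 \<le> j"
  shows "3 * 2 ^ (j - 1) \<le> gR t j" "gR t j < 2 ^ (j + 1)"
proof -
  obtain i where j: "j = Suc i" using assms by (cases j) auto
  show "3 * 2 ^ (j - 1) \<le> gR t j" "gR t j < 2 ^ (j + 1)"
    using gL_bounds[OF assms, of t] unfolding gR_def j by simp_all
qed

lemma grid_subset:
  assumes "2 \<le> t"
  shows "grid t \<subseteq> {1..t - 1}"
proof -
  have "gL t j \<in> {1..t - 1}" if "1 \<le> j" "3 * 2 ^ (j - 1) \<le> t - 1" for j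
    using gL_bounds[OF that(1), of t] that(2) order.trans[of 1 "2 ^ j" "gL t j"] by auto
  moreover have "gR t j \<in> {1..t - 1}" if "1 \<le> j" "2 ^ (j + 1) \<le> t - 1" for j
    using gR_bounds[OF that(1), of t] that(2) order.trans[of 1 "3 * 2 ^ (j - 1)" "gR t j"] by auto
  ultimately show ?thesis
    using assms unfolding grid_eq[OF assms] by auto
qed

lemma finite_grid: "2 \<le> t \<Longrightarrow> finite (grid t)"
  using grid_subset finite_subset by blast

lemma grid_cover:
  assumes "1 \<le> d" "2 * d \<le> t"
  shows "\<exists>g\<in>grid t. real d / 2 \<le> real g \<and> g \<le> d"
proof (cases "d = 1")
  case True
  then show ?thesis unfolding grid_def by auto
next
  case False
  have t: "2 \<le> t" using assms by simp
  obtain j where j: "2 ^ j \<le> d" "d < 2 ^ (j + 1)"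
    using ex_power_ivl1[of 2 d] assms by auto
  have "1 \<le> j" using j False assms by (cases j) auto
  note gL = gL_bounds[OF this, of t]
  have "gL t j \<in> grid t"
  proof -
    have "4 * 2 ^ (j - 1) \<le> t" using \<open>1 \<le> j\<close> j assms by (cases j) auto
    then show ?thesis unfolding grid_eq[OF t] using \<open>1 \<le> j\<close> by auto
  qed
  show ?thesis
  proof (cases "gL t j \<le> d")
    case True
    have "d \<le> 2 * gL t j" using j gL by simp
    then show ?thesis using \<open>gL t j \<in> grid t\<close> True by (intro bexI[of _ "gL t j"]) auto
  next
    case False
    have "2 \<le> j" using False gL j \<open>1 \<le> j\<close> by (cases "j = 1") auto
    then have i: "1 \<le> j - 1" "j - 1 + 1 = j" by auto
    note gR = gR_bounds[OF i(1), of t]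
    have "2 ^ (j - 1 + 1) \<le> t - 1" unfolding i(2) using j assms by linarith
    then have "gR t (j - 1) \<in> grid t"
      unfolding grid_eq[OF t] using i(1) by blast
    moreover have "d \<le> 2 * gR t (j - 1)"
    proof -
      obtain k where "j = Suc (Suc k)" using \<open>2 \<le> j\<close> by (metis add_2_eq_Suc le_Suc_ex)
      then show ?thesis using False gL gR by simp
    qed
    moreover have "gR t (j - 1) \<le> d" using gR i j by simp
    ultimately show ?thesis by (intro bexI[of _ "gR t (j - 1)"]) auto
  qed
qed

lemma pow2_card_le:
  fixes J :: "nat set" and c n :: nat
  assumes "\<And>j. j \<in> J \<Longrightarrow> 1 \<le> j \<and> c * 2 ^ j \<le> n"
  shows "c * 2 ^ card J \<le> max c n"
proof (cases "finite J \<and> J \<noteq> {}")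
  case True
  then have "J \<subseteq> {1..Max J}" using assms by auto
  then have "card J \<le> Max J" using card_mono[of "{1..Max J}" J] by simp
  then have "c * 2 ^ card J \<le> c * 2 ^ Max J" by simp
  also have "\<dots> \<le> n" using assms True by simp
  finally show ?thesis by simp
next
  case False
  then show ?thesis by auto
qed

lemma le_3_ln_if_pow2_le_square:
  assumes "2 ^ n \<le> t ^ 2" "1 \<le> t"
  shows "real n \<le> 3 * ln (real t)"
proof -
  have "2 powr real n \<le> real t ^ 2"
    using of_nat_le_iff[of "2 ^ n" "t ^ 2", where 'a=real] assms(1) by (simp add: powr_realpow)
  then have "real n \<le> log 2 (real t ^ 2)"
    using assms(2) by (simp add: le_log_iff)
  also have "\<dots> = 2 * ln (real t) / ln 2"
    using assms(2) by (simp add: log_def ln_realpow)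
  also have "\<dots> \<le> 3 * ln (real t)"
  proof -
    have "2 * ln (real t) \<le> 3 * ln (real t) * ln 2"
      using mult_left_mono[OF ln2_ge_two_thirds, of "3 * ln (real t)"] assms(2) by simp
    then show ?thesis by (simp add: divide_le_eq)
  qed
  finally show ?thesis .
qed

lemma card_grid_le:
  assumes t: "2 \<le> t"
  shows "real (card (grid t)) \<le> 3 * ln (real t)"
proof -
  define J1 where "J1 = {j. 1 \<le> j \<and> 3 * 2 ^ (j - 1) \<le> t - 1}"
  define J2 where "J2 = {j. 1 \<le> j \<and> 2 ^ (j + 1) \<le> t - 1}"
  have "j \<le> t" if "j \<in> J1" for j
    using that less_exp[of "j - 1"] unfolding J1_def mem_Collect_eq by linarith
  moreover have "j \<le> t" if "j \<in> J2" for j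
    using that less_exp[of j] power_increasing[of j "j + 1" "2::nat"]
    unfolding J2_def mem_Collect_eq by linarith
  ultimately have "J1 \<subseteq> {..t}" "J2 \<subseteq> {..t}" by auto
  then have fin: "finite J1" "finite J2" by (auto intro: finite_subset)
  have "card (grid t) \<le> Suc (card (gL t ` J1 \<union> gR t ` J2))"
    unfolding grid_eq[OF t] J1_def[symmetric] J2_def[symmetric]
    using fin by (simp add: card_insert_if)
  also have "\<dots> \<le> 1 + card (gL t ` J1) + card (gR t ` J2)"
    using card_Un_le[of "gL t ` J1" "gR t ` J2"] by simp
  also have "\<dots> \<le> 1 + card J1 + card J2"
    using card_image_le[OF fin(1), of "gL t"] card_image_le[OF fin(2), of "gR t"] by simp
  finally have card: "card (grid t) \<le> 1 + card J1 + card J2" .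
  have "3 * 2 ^ card J1 \<le> max 3 (2 * (t - 1))"
    by (rule pow2_card_le) (auto simp: J1_def power_eq_if)
  also have "\<dots> \<le> 2 * t" using t by simp
  finally have 1: "3 * 2 ^ card J1 \<le> 2 * t" .
  have "4 * 2 ^ card J2 \<le> max 4 (2 * (t - 1))"
    by (rule pow2_card_le) (auto simp: J2_def)
  also have "\<dots> \<le> 3 * t" using t by simp
  finally have 2: "4 * 2 ^ card J2 \<le> 3 * t" .
  have "12 * 2 ^ (1 + card J1 + card J2) \<le> 2 * (2 * t) * (3 * t)"
    using mult_le_mono[OF 1 2] by (simp add: power_add)
  then have "2 ^ (1 + card J1 + card J2) \<le> t ^ 2" by (simp add: power2_eq_square)
  then have "real (1 + card J1 + card J2) \<le> 3 * ln (real t)"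
    using t by (intro le_3_ln_if_pow2_le_square) auto
  then show ?thesis using card by linarith
qed

lemma exists_grid_detection:
  fixes R :: "nat \<Rightarrow> real"
  assumes mono: "mono R" and pos: "0 < R (2 * \<tau>)" and "R (2 * \<tau>) \<le> real \<tau> * \<rho>"
  defines "t \<equiv> \<tau> + nat \<lceil>R (2 * \<tau>) / \<rho>\<rceil>"
  shows "\<tau> < t \<and> t \<le> 2 * \<tau> \<and> R t \<le> real (t - \<tau>) * \<rho>
    \<and> (\<exists>g\<in>grid t. real (t - \<tau>) / 2 \<le> real g \<and> g \<le> t - \<tau>)"
proof -
  have "0 < \<rho>"
  proof (rule ccontr)
    assume "\<not> 0 < \<rho>"
    then have "real \<tau> * \<rho> \<le> 0" by (simp add: mult_nonneg_nonpos)
    then show False using assms by linarith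
  qed
  define d where "d = nat \<lceil>R (2 * \<tau>) / \<rho>\<rceil>"
  have x: "0 < R (2 * \<tau>) / \<rho>" "R (2 * \<tau>) / \<rho> \<le> real \<tau>"
    using assms \<open>0 < \<rho>\<close> by (simp_all add: pos_divide_le_eq)
  then have d: "1 \<le> d" "d \<le> \<tau>" "R (2 * \<tau>) / \<rho> \<le> real d"
    unfolding d_def by linarith+
  have t: "t = \<tau> + d" "t - \<tau> = d" unfolding t_def d_def by simp_all
  have "R t \<le> R (2 * \<tau>)" using mono d(2) t(1) by (simp add: monoD)
  also have "\<dots> \<le> real d * \<rho>" using d(3) \<open>0 < \<rho>\<close> by (simp add: pos_divide_le_eq)
  finally show ?thesis
    using grid_cover[OF d(1), of t] d t by auto
qed

lemma tauhat_less_infinity_iff: "tauhat T \<omega> < \<infinity> \<longleftrightarrow> (\<exists>t\<ge>2. \<exists>g\<in>grid t. T t g \<omega>)"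
  by (simp add: tauhat_def)

lemma tauhat_le_enat_iff: "tauhat T \<omega> \<le> enat n \<longleftrightarrow> (\<exists>t\<in>{2..n}. \<exists>g\<in>grid t. T t g \<omega>)"
proof
  assume le: "tauhat T \<omega> \<le> enat n"
  then have ex: "\<exists>t. 2 \<le> t \<and> (\<exists>g\<in>grid t. T t g \<omega>)"
    by (auto simp: tauhat_def split: if_splits)
  let ?t = "LEAST t. 2 \<le> t \<and> (\<exists>g\<in>grid t. T t g \<omega>)"
  have "2 \<le> ?t \<and> (\<exists>g\<in>grid ?t. T ?t g \<omega>)" using LeastI_ex[OF ex] .
  moreover have "?t \<le> n" using le ex by (simp add: tauhat_def)
  ultimately show "\<exists>t\<in>{2..n}. \<exists>g\<in>grid t. T t g \<omega>" by auto
next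
  assume "\<exists>t\<in>{2..n}. \<exists>g\<in>grid t. T t g \<omega>"
  then obtain t where "t \<in> {2..n}" "\<exists>g\<in>grid t. T t g \<omega>" by blast
  then show "tauhat T \<omega> \<le> enat n"
    unfolding tauhat_def using Least_le[of "\<lambda>t. 2 \<le> t \<and> (\<exists>g\<in>grid t. T t g \<omega>)" t]
    by auto
qed

lemma sets_tauhat_le_enat:
  assumes "\<And>t g. 2 \<le> t \<Longrightarrow> g \<in> grid t \<Longrightarrow> {\<omega> \<in> space M. T t g \<omega>} \<in> sets M"
  shows "{\<omega> \<in> space M. tauhat T \<omega> \<le> enat n} \<in> sets M"
proof -
  have "{\<omega> \<in> space M. tauhat T \<omega> \<le> enat n}
      = (\<Union>t\<in>{2..n}. \<Union>g\<in>grid t. {\<omega> \<in> space M. T t g \<omega>})"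
    by (auto simp: tauhat_le_enat_iff)
  then show ?thesis using assms finite_grid by (auto intro!: sets.finite_UN)
qed

lemma sets_Ptau:
  assumes "sets P1 = sets N" "sets P2 = sets N"
  shows "sets (Ptau P1 P2 \<tau>) = sets (\<Pi>\<^sub>M i\<in>UNIV. N)"
  unfolding Ptau_def using assms by (intro sets_PiM_cong) auto

lemma pred_Ptau:
  assumes "sets P1 = sets N" "sets P2 = sets N"
    and "f \<in> measurable (\<Pi>\<^sub>M i\<in>UNIV. N) (count_space UNIV)"
  shows "{\<omega> \<in> space (Ptau P1 P2 \<tau>). f \<omega>} \<in> sets (Ptau P1 P2 \<tau>)"
  using assms(3) by (intro predE) (simp only: measurable_cong_sets[OF sets_Ptau[OF assms(1,2)] refl])

lemma prob_space_Ptau: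
  assumes "prob_space P1" "prob_space P2"
  shows "prob_space (Ptau P1 P2 \<tau>)"
  unfolding Ptau_def using assms by (intro prob_space_PiM) auto

lemma sum_inverse_squares_le: "(\<Sum>t = 2..n. 1 / real t ^ 2) \<le> 1 - 1 / real n"
proof (induction n)
  case (Suc n)
  show ?case
  proof (cases "n = 0")
    case False
    have "1 / real (Suc n) ^ 2 \<le> 1 / (real n * real (Suc n))"
      using False by (intro divide_left_mono) (auto simp: power2_eq_square)
    also have "\<dots> = 1 / real n - 1 / real (Suc n)"
      using False by (simp add: field_simps)
    finally have "1 / real (Suc n) ^ 2 \<le> 1 / real n - 1 / real (Suc n)" .
    then show ?thesis using Suc by simp
  qed simp
qed simp

lemma (in prob_space) prob_UN_le_of_inverse_squares:
  assumes "0 \<le> c"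
    and "\<And>t. 2 \<le> t \<Longrightarrow> E t \<in> events"
    and "\<And>t. 2 \<le> t \<Longrightarrow> prob (E t) \<le> c / real t ^ 2"
  shows "prob (\<Union>t\<in>{2..}. E t) \<le> c"
proof -
  define F where "F t = (if 2 \<le> t then E t else {})" for t
  have F: "range F \<subseteq> events" using assms(2) by (auto simp: F_def)
  have partial: "(\<Sum>t<n. prob (F t)) \<le> c" for n
  proof -
    have "(\<Sum>t<n. prob (F t)) = (\<Sum>t\<in>{2..<n}. prob (E t))"
      by (rule sum.mono_neutral_cong_right) (auto simp: F_def)
    also have "\<dots> \<le> (\<Sum>t\<in>{2..<n}. c * (1 / real t ^ 2))"
      using assms(3) by (intro sum_mono) auto
    also have "\<dots> \<le> (\<Sum>t\<in>{2..n}. c * (1 / real t ^ 2))"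
      using assms(1) by (intro sum_mono2) auto
    also have "\<dots> \<le> c * 1"
      unfolding sum_distrib_left[symmetric]
      using sum_inverse_squares_le[of n] assms(1)
      by (intro mult_left_mono) (auto intro: order.trans)
    finally show ?thesis by simp
  qed
  have "summable (\<lambda>t. prob (F t))"
    using partial by (intro summableI_nonneg_bounded) auto
  then have "prob (\<Union>t. F t) \<le> (\<Sum>t. prob (F t))"
    using finite_measure_subadditive_countably[OF F] by simp
  also have "\<dots> \<le> c" using suminf_le_const[OF \<open>summable _\<close> partial] .
  also have "(\<Union>t. F t) = (\<Union>t\<in>{2..}. E t)" by (auto simp: F_def)
  finally show ?thesis .
qed

lemma (in prob_space) prob_grid_alarm_le:
  assumes t: "2 \<le> t" and "0 \<le> \<delta>"
    and events: "\<And>g. g \<in> grid t \<Longrightarrow> A g \<in> events"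
    and bound: "\<And>g. g \<in> grid t \<Longrightarrow> prob (A g) \<le> \<delta> / (3 * real t ^ 2 * ln (real t))"
  shows "prob (\<Union>g\<in>grid t. A g) \<le> \<delta> / real t ^ 2"
proof -
  have "0 < ln (real t)" using t by simp
  have "prob (\<Union>g\<in>grid t. A g) \<le> (\<Sum>g\<in>grid t. prob (A g))"
    using finite_grid[OF t] events by (rule measure_UNION_le)
  also have "\<dots> \<le> real (card (grid t)) * (\<delta> / (3 * real t ^ 2 * ln (real t)))"
    using sum_mono[OF bound] by simp
  also have "\<dots> \<le> 3 * ln (real t) * (\<delta> / (3 * real t ^ 2 * ln (real t)))"
    using card_grid_le[OF t] \<open>0 \<le> \<delta>\<close> by (intro mult_right_mono) auto
  also have "\<dots> = \<delta> / real t ^ 2" using \<open>0 < ln (real t)\<close> by simp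
  finally show ?thesis .
qed

lemma (in prob_space) prob_tauhat_finite_le:
  assumes "0 \<le> \<delta>"
    and events: "\<And>t g. 2 \<le> t \<Longrightarrow> g \<in> grid t \<Longrightarrow> {\<omega> \<in> space M. T t g \<omega>} \<in> events"
    and bound: "\<And>t g. 2 \<le> t \<Longrightarrow> g \<in> grid t \<Longrightarrow>
      prob {\<omega> \<in> space M. T t g \<omega>} \<le> \<delta> / (3 * real t ^ 2 * ln (real t))"
  shows "prob {\<omega> \<in> space M. tauhat T \<omega> < \<infinity>} \<le> \<delta>"
proof -
  have "{\<omega> \<in> space M. tauhat T \<omega> < \<infinity>} = (\<Union>t\<in>{2..}. \<Union>g\<in>grid t. {\<omega> \<in> space M. T t g \<omega>})"
    unfolding tauhat_less_infinity_iff by auto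
  also have "prob \<dots> \<le> \<delta>"
    using finite_grid events bound \<open>0 \<le> \<delta>\<close>
    by (intro prob_UN_le_of_inverse_squares prob_grid_alarm_le sets.finite_UN) auto
  finally show ?thesis .
qed

theorem proposition3:
  fixes P1 P2 :: "(real ^ 'p) measure"
    and T :: "nat \<Rightarrow> nat \<Rightarrow> (nat \<Rightarrow> real ^ 'p) \<Rightarrow> bool"
    and \<delta> \<rho> :: real
    and r :: "nat \<Rightarrow> real \<Rightarrow> real"
  assumes P1: "prob_space P1" "sets P1 = sets borel"
    and P2: "prob_space P2" "sets P2 = sets borel"
    and \<delta>: "0 < \<delta>" "\<delta> < 1"
    and meas: "\<And>t g. 2 \<le> t \<Longrightarrow> g \<in> {1..t-1} \<Longrightarrow>
        T t g \<in> measurable (\<Pi>\<^sub>M i\<in>UNIV. (borel :: (real ^ 'p) measure)) (count_space UNIV)"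
    and dep: "\<And>t g \<omega> \<omega>'. 2 \<le> t \<Longrightarrow> g \<in> {1..t-1} \<Longrightarrow> (\<forall>i\<in>{1..t}. \<omega> i = \<omega>' i) \<Longrightarrow>
        T t g \<omega> = T t g \<omega>'"
    and A: "\<And>t g. 2 \<le> t \<Longrightarrow> g \<in> {1..t-1} \<Longrightarrow>
        measure (Ptau P1 P2 \<infinity>) {\<omega> \<in> space (Ptau P1 P2 \<infinity>). T t g \<omega>}
          \<le> \<delta> / (3 * real t ^ 2 * ln (real t))"
    and \<rho>: "0 \<le> \<rho>"
    and rpos: "\<And>t. 0 < r t \<delta>"
    and rmono: "mono (\<lambda>t. r t \<delta>)"
    and B: "\<And>\<tau> t g. \<tau> < t \<Longrightarrow> t \<le> 2 * \<tau> \<Longrightarrow> r t \<delta> \<le> real (t - \<tau>) * \<rho> \<Longrightarrow>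
        real (t - \<tau>) / 2 \<le> real g \<Longrightarrow> g \<le> t - \<tau> \<Longrightarrow>
        1 - \<delta> \<le> measure (Ptau P1 P2 (enat \<tau>)) {\<omega> \<in> space (Ptau P1 P2 (enat \<tau>)). T t g \<omega>}"
  shows "measure (Ptau P1 P2 \<infinity>) {\<omega> \<in> space (Ptau P1 P2 \<infinity>). tauhat T \<omega> < \<infinity>} \<le> \<delta>
    \<and> (\<forall>\<tau>::nat. r (2 * \<tau>) \<delta> \<le> real \<tau> * \<rho> \<longrightarrow>
        1 - \<delta> \<le> measure (Ptau P1 P2 (enat \<tau>))
          {\<omega> \<in> space (Ptau P1 P2 (enat \<tau>)).
             tauhat T \<omega> \<le> enat (\<tau> + nat \<lceil>r (2 * \<tau>) \<delta> / \<rho>\<rceil>)})"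
proof -
  have in_range: "g \<in> {1..t-1}" if "2 \<le> t" "g \<in> grid t" for t g
    using grid_subset that by blast
  have events: "{\<omega> \<in> space (Ptau P1 P2 \<tau>). T t g \<omega>} \<in> sets (Ptau P1 P2 \<tau>)"
    if "2 \<le> t" "g \<in> grid t" for \<tau> t g
    using meas in_range that by (intro pred_Ptau[OF P1(2) P2(2)]) blast
  have "measure (Ptau P1 P2 \<infinity>) {\<omega> \<in> space (Ptau P1 P2 \<infinity>). tauhat T \<omega> < \<infinity>} \<le> \<delta>"
    using events A in_range \<delta>(1)
    by (intro prob_space.prob_tauhat_finite_le prob_space_Ptau P1 P2) auto
  moreover have "1 - \<delta> \<le> measure (Ptau P1 P2 (enat \<tau>)) {\<omega> \<in> space (Ptau P1 P2 (enat \<tau>)).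
      tauhat T \<omega> \<le> enat (\<tau> + nat \<lceil>r (2 * \<tau>) \<delta> / \<rho>\<rceil>)}"
    if detectable: "r (2 * \<tau>) \<delta> \<le> real \<tau> * \<rho>" for \<tau>
  proof -
    interpret prob_space "Ptau P1 P2 (enat \<tau>)" using P1(1) P2(1) by (rule prob_space_Ptau)
    let ?t = "\<tau> + nat \<lceil>r (2 * \<tau>) \<delta> / \<rho>\<rceil>"
    note detection = exists_grid_detection[OF rmono rpos detectable]
    then have "2 \<le> ?t" by (elim conjE) linarith
    obtain g where "g \<in> grid ?t"
      and "1 - \<delta> \<le> prob {\<omega> \<in> space (Ptau P1 P2 (enat \<tau>)). T ?t g \<omega>}"
      using detection B by blast
    then show ?thesis
      using \<open>2 \<le> ?t\<close> events sets_tauhat_le_enat[OF events]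
      by (elim order.trans, intro finite_measure_mono) (auto simp: tauhat_le_enat_iff)
  qed
  ultimately show ?thesis by blast
qed

end
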